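(* Let $(X,d)$ be a locally compact, second countable metric space. Let $(f_\lambda)$ be a sequence in $\Gamma(X)$ and $f,g\in C_{od}(X,X)$ such that $(f_\lambda)$ $\tau_{cc}$-converges to $f$, $(f_\lambda^{-1})$ $\tau_{cc}$-converges to $g$, $\mathrm{im}(f)\subseteq\mathrm{dom}(g)$ and $\mathrm{im}(g)\subseteq\mathrm{dom}(f)$. Then $f$ and $g$ are homeomorphisms (onto their images) and $f^{-1}=g$.
   Context: $\Gamma(X)$ denotes the set of homeomorphisms $f:\mathrm{dom}(f)\to\mathrm{im}(f)$ between open subsets of $X$ (including the empty function). $C_{od}(X,X)$ is the set of continuous maps $f:\mathrm{dom}(f)\to X$ with $\mathrm{dom}(f)$ open in $X$. A sequence $(h_\lambda)$ in $C_{od}(X,X)$ $\tau_{cc}$-converges to $h\in C_{od}(X,X)$ if for every nonempty compact $K\subseteq\mathrm{dom}(h)$ and $\epsilon>0$ there is $\lambda_0$ such that for all $\lambda\ge\lambda_0$, $K\subseteq\mathrm{dom}(h_\lambda)$ and $\sup_{x\in K}d(h_\lambda(x),h(x))<\epsilon$. *)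

theory Defs
  imports "HOL-Analysis.Analysis"
begin

text \<open>A partial map on X is represented by a pair: its domain D and a total
function f whose values outside D are irrelevant.\<close>

definition in_Gamma :: "'a::metric_space set \<Rightarrow> ('a \<Rightarrow> 'a) \<Rightarrow> bool" where
  "in_Gamma D f \<longleftrightarrow> open D \<and> open (f ` D) \<and>
     homeomorphism D (f ` D) f (inv_into D f)"

definition in_Cod :: "'a::metric_space set \<Rightarrow> ('a \<Rightarrow> 'a) \<Rightarrow> bool" where
  "in_Cod D f \<longleftrightarrow> open D \<and> continuous_on D f"

definition cc_conv :: "(nat \<Rightarrow> 'a::metric_space set) \<Rightarrow> (nat \<Rightarrow> 'a \<Rightarrow> 'a)
    \<Rightarrow> 'a set \<Rightarrow> ('a \<Rightarrow> 'a) \<Rightarrow> bool" where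
  "cc_conv Dn hn D h \<longleftrightarrow>
     (\<forall>K. K \<noteq> {} \<and> compact K \<and> K \<subseteq> D \<longrightarrow>
        (\<forall>e>0. \<exists>N. \<forall>n\<ge>N. K \<subseteq> Dn n \<and> (SUP x\<in>K. dist (hn n x) (h x)) < e))"

end

theory Submission
  imports Defs
begin

text \<open>Local compactness upgrades \<open>\<tau>\<^sub>c\<^sub>c\<close>-convergence to a continuous limit into continuous
  convergence: \<open>x\<^sub>n \<longrightarrow> y\<close> implies \<open>h\<^sub>n x\<^sub>n \<longrightarrow> h y\<close>, since the \<open>x\<^sub>n\<close> eventually stay in a compact
  neighbourhood of \<open>y\<close>, where the convergence is uniform. Applying this to \<open>x\<^sub>n = f\<^sub>n x\<close> gives
  \<open>f\<^sub>n\<^sup>-\<^sup>1 (f\<^sub>n x) \<longrightarrow> g (f x)\<close>, while the left-hand side is eventually \<open>x\<close>; symmetrically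
  \<open>f (g y) = y\<close>.\<close>

lemma locally_compact_open_compact_nbhd:
  fixes y :: "'a::metric_space"
  assumes "locally_compact_space (euclidean :: 'a topology)" "open D" "y \<in> D"
  obtains U K where "open U" "compact K" "y \<in> U" "U \<subseteq> K" "K \<subseteq> D"
proof -
  have "neighbourhood_base_of (compactin euclidean) (euclidean :: 'a topology)"
    using assms(1) locally_compact_space_neighbourhood_base Hausdorff_space_euclidean by blast
  then show ?thesis using assms(2,3) that unfolding neighbourhood_base_of
    by (metis compactin_euclidean_iff open_openin)
qed

lemma cc_conv_eventually_in_domain:
  assumes "cc_conv Dn hn D h" "z \<in> D"
  shows "\<forall>\<^sub>F n in sequentially. z \<in> Dn n"
proof -
  obtain N where "\<forall>n\<ge>N. {z} \<subseteq> Dn n"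
    using assms unfolding cc_conv_def by (metis compact_sing empty_not_insert
        insert_subset empty_subsetI zero_less_one)
  then show ?thesis unfolding eventually_sequentially by blast
qed

lemma cc_conv_eventually_uniform:
  assumes cc: "cc_conv Dn hn D h" and ch: "continuous_on D h"
    and chn: "\<And>n. continuous_on (Dn n) (hn n)"
    and K: "compact K" "K \<subseteq> D" and e: "e > 0"
  shows "\<forall>\<^sub>F n in sequentially. K \<subseteq> Dn n \<and> (\<forall>x\<in>K. dist (hn n x) (h x) < e)"
proof (cases "K = {}")
  case False
  then obtain N where N: "\<And>n. n \<ge> N \<Longrightarrow> K \<subseteq> Dn n \<and> (SUP x\<in>K. dist (hn n x) (h x)) < e"
    using cc K e unfolding cc_conv_def by meson
  have "K \<subseteq> Dn n \<and> (\<forall>x\<in>K. dist (hn n x) (h x) < e)" if "n \<ge> N" for n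
  proof -
    have KD: "K \<subseteq> Dn n" and sup: "(SUP x\<in>K. dist (hn n x) (h x)) < e"
      using N that by auto
    have "continuous_on K (\<lambda>x. dist (hn n x) (h x))"
      by (intro continuous_intros continuous_on_subset[OF chn KD] continuous_on_subset[OF ch K(2)])
    then have "bdd_above ((\<lambda>x. dist (hn n x) (h x)) ` K)"
      using K(1) by (simp add: bounded_imp_bdd_above compact_imp_bounded compact_continuous_image)
    then show ?thesis using KD sup cSUP_upper by fastforce
  qed
  then show ?thesis unfolding eventually_sequentially by blast
qed simp

lemma cc_conv_imp_continuous_convergence:
  fixes y :: "'a::metric_space"
  assumes lc: "locally_compact_space (euclidean :: 'a topology)"
    and cc: "cc_conv Dn hn D h" and cod: "in_Cod D h"
    and chn: "\<And>n. continuous_on (Dn n) (hn n)"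
    and y: "y \<in> D" and xs: "xs \<longlonglongrightarrow> y"
  shows "(\<lambda>n. hn n (xs n)) \<longlonglongrightarrow> h y"
proof (rule tendstoI)
  fix e :: real assume e: "e > 0"
  have D: "open D" and ch: "continuous_on D h" using cod by (auto simp: in_Cod_def)
  obtain U K where UK: "open U" "compact K" "y \<in> U" "U \<subseteq> K" "K \<subseteq> D"
    using locally_compact_open_compact_nbhd[OF lc D y] by blast
  have "(\<lambda>n. h (xs n)) \<longlonglongrightarrow> h y"
    using ch D y xs continuous_on_eq_continuous_at isCont_tendsto_compose by blast
  then have "\<forall>\<^sub>F n in sequentially. dist (h (xs n)) (h y) < e/2"
    using e tendstoD half_gt_zero by blast
  moreover have "\<forall>\<^sub>F n in sequentially. xs n \<in> U"
    using xs UK(1,3) by (simp add: tendsto_def)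
  moreover have "\<forall>\<^sub>F n in sequentially. \<forall>x\<in>K. dist (hn n x) (h x) < e/2"
    using cc_conv_eventually_uniform[OF cc ch chn UK(2,5), of "e/2"] e
    by (auto elim: eventually_mono)
  ultimately show "\<forall>\<^sub>F n in sequentially. dist (hn n (xs n)) (h y) < e"
  proof eventually_elim
    case (elim n)
    then show ?case
      using UK(4) dist_triangle_half_l[of "hn n (xs n)" "h (xs n)" e "h y"] dist_commute
      by (metis subsetD)
  qed
qed

lemma cc_conv_limits_left_inverse:
  fixes x :: "'a::metric_space"
  assumes lc: "locally_compact_space (euclidean :: 'a topology)"
    and cc_h: "cc_conv Dn hn D h" "in_Cod D h" "\<And>n. continuous_on (Dn n) (hn n)"
    and cc_k: "cc_conv En kn E k" "in_Cod E k" "\<And>n. continuous_on (En n) (kn n)"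
    and hDE: "h ` D \<subseteq> E" and inv: "\<And>n x. x \<in> Dn n \<Longrightarrow> kn n (hn n x) = x"
    and x: "x \<in> D"
  shows "k (h x) = x"
proof -
  have "(\<lambda>n. hn n x) \<longlonglongrightarrow> h x"
    using cc_conv_imp_continuous_convergence[OF lc cc_h x tendsto_const] .
  then have "(\<lambda>n. kn n (hn n x)) \<longlonglongrightarrow> k (h x)"
    using cc_conv_imp_continuous_convergence[OF lc cc_k] hDE x by blast
  moreover have "\<forall>\<^sub>F n in sequentially. kn n (hn n x) = x"
    using cc_conv_eventually_in_domain[OF cc_h(1) x] by (auto elim: eventually_mono simp: inv)
  then have "(\<lambda>n. kn n (hn n x)) \<longlonglongrightarrow> x"
    by (rule tendsto_eventually)
  ultimately show ?thesis using LIMSEQ_unique by blast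
qed

theorem mainTheorem11:
  fixes Fd :: "nat \<Rightarrow> 'a::{metric_space, second_countable_topology} set"
    and F :: "nat \<Rightarrow> 'a \<Rightarrow> 'a"
    and Df Dg :: "'a set" and f g :: "'a \<Rightarrow> 'a"
  assumes "locally_compact_space (euclidean :: 'a topology)"
    and "\<And>n. in_Gamma (Fd n) (F n)"
    and "in_Cod Df f" and "in_Cod Dg g"
    and "cc_conv Fd F Df f"
    and "cc_conv (\<lambda>n. F n ` Fd n) (\<lambda>n. inv_into (Fd n) (F n)) Dg g"
    and "f ` Df \<subseteq> Dg" and "g ` Dg \<subseteq> Df"
  shows "homeomorphism Df Dg f g"
proof -
  have hom: "\<And>n. homeomorphism (Fd n) (F n ` Fd n) (F n) (inv_into (Fd n) (F n))"
    using assms(2) by (simp add: in_Gamma_def)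
  note cont = homeomorphism_cont1[OF hom] homeomorphism_cont2[OF hom]
  have "g (f x) = x" if "x \<in> Df" for x
    using cc_conv_limits_left_inverse[OF assms(1) assms(5,3) cont(1) assms(6,4) cont(2) assms(7)]
      homeomorphism_apply1[OF hom] that by blast
  moreover have "f (g y) = y" if "y \<in> Dg" for y
    using cc_conv_limits_left_inverse[OF assms(1) assms(6,4) cont(2) assms(5,3) cont(1) assms(8)]
      homeomorphism_apply2[OF hom] that by blast
  ultimately show ?thesis
    using assms(3,4,7,8) by (intro homeomorphismI) (auto simp: in_Cod_def)
qed

end
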